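(* Let $G$ be a connected edge-square finite simple graph of order $p$ and size $q$, with normal graph algebra $\mathcal{N}G$ over a field $\mathbb{F}$ of characteristic not $2$. Then $q=p-1$ or $q=p$, and: (1) if $q=p-1$, then $\mathcal{N}G$ is isomorphic (as a normal algebra) to $\mathbb{F}^0\oplus\mathcal{O}_{p-1}$, $\dim\mathrm{ann}\,G=1$, and $G$ is a tree; (2) if $q=p$, then $\mathcal{N}G$ is isomorphic to $\mathcal{O}_p$, $\dim\mathrm{ann}\,G=0$, and $G$ is unicyclic with an odd cycle.
   Context: A normal algebra is a finite-dimensional $\mathbb{F}$-vector space $\mathcal{N}=U\oplus\mathfrak{Z}$ with a commutative bilinear product such that $U\mathfrak{Z}=0$, $\mathfrak{Z}\mathfrak{Z}=0$, $UU\subseteq\mathfrak{Z}$; an isomorphism of normal algebras is a product-preserving linear bijection mapping $U$ onto $U'$ and $\mathfrak{Z}$ onto $\mathfrak{Z}'$; direct sums are taken componentwise. For a finite simple graph $G$ with vertex set $VG$ ($p=|VG|$) and edge set $EG$ ($q=|EG|$), the normal graph algebra $\mathcal{N}G$ has $U=U_G$ with basis $VG$ and $\mathfrak{Z}=\mathfrak{Z}_G$ with basis $EG$ (edge with endpoints $x,y$ written $[x,y]$), with product determined by: for distinct vertices $x,y$, $xy=[x,y]$ if adjacent and $0$ otherwise; $x^2=\sum_{y\sim x}[x,y]$. $G$ is edge-square if for every edge $\mathfrak{e}$ there is $u\in U_G$ with $u^2=\mathfrak{e}$. $\mathrm{ann}\,G=\{u\in U_G: uU_G=0\}$. $\mathbb{F}^0$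 is the normal algebra with $U=\mathbb{F}$, $\mathfrak{Z}=0$ and all products $0$. For $n\ge0$, $\mathcal{O}_n$ is the normal algebra with $U=\langle w_1,\dots,w_n\rangle$, $\mathfrak{Z}=\langle\mathfrak{z}_1,\dots,\mathfrak{z}_n\rangle$ (bases), $w_i^2=\mathfrak{z}_i$, $w_iw_j=0$ for $i\ne j$, and all other basis products $0$. A unicyclic graph is a connected graph with exactly one cycle. *)

theory Defs
  imports Main "HOL.Vector_Spaces" "HOL-Library.Function_Algebras"
begin

text \<open>A (finite-dimensional) normal algebra over a field 'f is described by a finite
index set UI (a basis of U), a finite index set ZI (a basis of Z) and structure
constants sc a b j (coefficient of basis vector j of Z in the product of basis
vectors a, b of U).  Elements of U (resp. Z) are coordinate functions vanishing
outside UI (resp. ZI).  The product U x U -> Z is the bilinear extension;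
all products involving Z are zero (by definition of a normal algebra).\<close>

record ('i, 'j, 'f) nalg =
  UI :: "'i set"
  ZI :: "'j set"
  sc :: "'i \<Rightarrow> 'i \<Rightarrow> 'j \<Rightarrow> 'f"

definition vecs :: "'i set \<Rightarrow> ('i \<Rightarrow> 'f::zero) set" where
  "vecs I = {u. \<forall>i. i \<notin> I \<longrightarrow> u i = 0}"

definition nprod :: "('i, 'j, 'f::comm_ring_1) nalg \<Rightarrow> ('i \<Rightarrow> 'f) \<Rightarrow> ('i \<Rightarrow> 'f) \<Rightarrow> ('j \<Rightarrow> 'f)" where
  "nprod A u w = (\<lambda>j. if j \<in> ZI A then (\<Sum>a\<in>UI A. \<Sum>b\<in>UI A. u a * w b * sc A a b j) else 0)"

definition is_normal_alg :: "('i, 'j, 'f::comm_ring_1) nalg \<Rightarrow> bool" where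
  "is_normal_alg A \<longleftrightarrow> finite (UI A) \<and> finite (ZI A) \<and>
     (\<forall>a b j. sc A a b j = sc A b a j)"

definition lin_on :: "'i set \<Rightarrow> (('i \<Rightarrow> 'f::comm_ring_1) \<Rightarrow> ('k \<Rightarrow> 'f)) \<Rightarrow> bool" where
  "lin_on I f \<longleftrightarrow> (\<forall>u\<in>vecs I. \<forall>w\<in>vecs I. f (u + w) = f u + f w) \<and>
                   (\<forall>c. \<forall>u\<in>vecs I. f (\<lambda>i. c * u i) = (\<lambda>k. c * f u k))"

definition nalg_iso :: "('i, 'j, 'f::comm_ring_1) nalg \<Rightarrow> ('k, 'l, 'f) nalg \<Rightarrow> bool" where
  "nalg_iso A B \<longleftrightarrow> (\<exists>f g.
      lin_on (UI A) f \<and> bij_betw f (vecs (UI A)) (vecs (UI B)) \<and>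
      lin_on (ZI A) g \<and> bij_betw g (vecs (ZI A)) (vecs (ZI B)) \<and>
      (\<forall>u\<in>vecs (UI A). \<forall>w\<in>vecs (UI A). g (nprod A u w) = nprod B (f u) (f w)))"

definition nalg_sum :: "('i, 'j, 'f::comm_ring_1) nalg \<Rightarrow> ('k, 'l, 'f) nalg \<Rightarrow> ('i + 'k, 'j + 'l, 'f) nalg" where
  "nalg_sum A B = \<lparr> UI = Inl ` UI A \<union> Inr ` UI B, ZI = Inl ` ZI A \<union> Inr ` ZI B,
     sc = (\<lambda>x y z. case (x, y, z) of
              (Inl a, Inl b, Inl j) \<Rightarrow> sc A a b j
            | (Inr a, Inr b, Inr j) \<Rightarrow> sc B a b j
            | _ \<Rightarrow> 0) \<rparr>"

definition F0 :: "(unit, nat, 'f::comm_ring_1) nalg" where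
  "F0 = \<lparr> UI = {()}, ZI = {}, sc = (\<lambda>_ _ _. 0) \<rparr>"

definition On :: "nat \<Rightarrow> (nat, nat, 'f::comm_ring_1) nalg" where
  "On n = \<lparr> UI = {..<n}, ZI = {..<n}, sc = (\<lambda>a b j. if a = b \<and> b = j then 1 else 0) \<rparr>"

definition simple_graph :: "'v set \<Rightarrow> ('v \<Rightarrow> 'v \<Rightarrow> bool) \<Rightarrow> bool" where
  "simple_graph V E \<longleftrightarrow> finite V \<and> (\<forall>x y. E x y \<longrightarrow> x \<in> V \<and> y \<in> V \<and> x \<noteq> y \<and> E y x)"

definition edges :: "'v set \<Rightarrow> ('v \<Rightarrow> 'v \<Rightarrow> bool) \<Rightarrow> 'v set set" where
  "edges V E = {{x, y} | x y. x \<in> V \<and> y \<in> V \<and> E x y}"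

text \<open>Normal graph algebra: U has basis V, Z has basis the edges; for distinct x, y,
xy = [x,y] if adjacent and 0 otherwise; x^2 = sum of [x,y] over neighbours y.
Thus the coefficient of edge e in ab is 1 iff both a and b lie on e.\<close>

definition graph_alg :: "'v set \<Rightarrow> ('v \<Rightarrow> 'v \<Rightarrow> bool) \<Rightarrow> ('v, 'v set, 'f::comm_ring_1) nalg" where
  "graph_alg V E = \<lparr> UI = V, ZI = edges V E,
     sc = (\<lambda>a b e. if a \<in> e \<and> b \<in> e then 1 else 0) \<rparr>"

definition edge_square :: "'f::comm_ring_1 itself \<Rightarrow> 'v set \<Rightarrow> ('v \<Rightarrow> 'v \<Rightarrow> bool) \<Rightarrow> bool" where
  "edge_square _ V E \<longleftrightarrow> (\<forall>e\<in>edges V E. \<exists>u \<in> vecs V.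
      nprod (graph_alg V E :: ('v, 'v set, 'f) nalg) u u = (\<lambda>e'. if e' = e then 1 else 0))"

definition ann_graph :: "'f::comm_ring_1 itself \<Rightarrow> 'v set \<Rightarrow> ('v \<Rightarrow> 'v \<Rightarrow> bool) \<Rightarrow> ('v \<Rightarrow> 'f) set" where
  "ann_graph _ V E = {u \<in> vecs V. \<forall>w\<in>vecs V. nprod (graph_alg V E :: ('v, 'v set, 'f) nalg) u w = 0}"

definition fdim :: "('v \<Rightarrow> 'f::field) set \<Rightarrow> nat" where
  "fdim S = vector_space.dim (\<lambda>c (u::'v \<Rightarrow> 'f) x. c * u x) S"

definition is_walk :: "('v \<Rightarrow> 'v \<Rightarrow> bool) \<Rightarrow> 'v list \<Rightarrow> bool" where
  "is_walk E xs \<longleftrightarrow> xs \<noteq> [] \<and> (\<forall>i. Suc i < length xs \<longrightarrow> E (xs ! i) (xs ! Suc i))"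

definition connected_graph :: "'v set \<Rightarrow> ('v \<Rightarrow> 'v \<Rightarrow> bool) \<Rightarrow> bool" where
  "connected_graph V E \<longleftrightarrow> V \<noteq> {} \<and>
     (\<forall>x\<in>V. \<forall>y\<in>V. \<exists>xs. is_walk E xs \<and> hd xs = x \<and> last xs = y)"

text \<open>A cycle (as a subgraph, identified with its edge set) is given by a list of
k \<ge> 3 distinct vertices, consecutive ones adjacent and the last adjacent to the first.\<close>

definition cycle_edges :: "'v list \<Rightarrow> 'v set set" where
  "cycle_edges xs = {{xs ! i, xs ! ((Suc i) mod length xs)} | i. i < length xs}"

definition is_cycle_list :: "('v \<Rightarrow> 'v \<Rightarrow> bool) \<Rightarrow> 'v list \<Rightarrow> bool" where
  "is_cycle_list E xs \<longleftrightarrow> length xs \<ge> 3 \<and> distinct xs \<and>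
     (\<forall>i < length xs. E (xs ! i) (xs ! ((Suc i) mod length xs)))"

definition cycles :: "('v \<Rightarrow> 'v \<Rightarrow> bool) \<Rightarrow> 'v set set set" where
  "cycles E = {cycle_edges xs | xs. is_cycle_list E xs}"

definition is_tree :: "'v set \<Rightarrow> ('v \<Rightarrow> 'v \<Rightarrow> bool) \<Rightarrow> bool" where
  "is_tree V E \<longleftrightarrow> connected_graph V E \<and> cycles E = {}"

definition unicyclic :: "'v set \<Rightarrow> ('v \<Rightarrow> 'v \<Rightarrow> bool) \<Rightarrow> bool" where
  "unicyclic V E \<longleftrightarrow> connected_graph V E \<and> (\<exists>!C. C \<in> cycles E)"

end

theory Submission
  imports Defs "HOL.Rat"
begin

text \<open>The product of the normal graph algebra factors through the incidence map
  \<open>\<iota> : U \<rightarrow> Z\<close>, \<open>\<iota> u e = (\<Sum>x\<in>e. u x)\<close>: in the edge basis \<open>u w = \<iota> u \<cdot> \<iota> w\<close> coordinatewise,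
  so \<open>ann G = ker \<iota>\<close>. Edge-squareness puts every edge vector in the image of \<open>\<iota>\<close> (up to sign),
  so \<open>\<iota>\<close> is onto and \<open>q \<le> p\<close>; it also makes every cycle odd, since a vector whose image is
  supported on one cycle edge alternates in sign along the other edges of that cycle. On a
  connected graph a kernel vector alternates in sign along every edge, so it is determined by its
  value at one vertex: \<open>dim ker \<iota> \<le> 1\<close>, hence \<open>p \<le> q + 1\<close>, and an odd cycle kills the kernel
  when \<open>2 \<noteq> 0\<close>. If the kernel is a line, then \<open>q = p - 1\<close>, there is no cycle, and the value at
  a vertex splits off the summand \<open>F\<^sup>0\<close>. If the kernel is zero, \<open>\<iota>\<close> is an isomorphism giving
  \<open>O\<^sub>p\<close>; as \<open>q = p\<close> the graph is not a forest, and its cycle is unique because deleting an edge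
  from each of two cycles would leave a connected graph with \<open>q - 2 < p - 1\<close> edges.\<close>

section \<open>Coordinate spaces\<close>

text \<open>This is exactly the scalar multiplication in the definition of \<^const>\<open>fdim\<close>.\<close>

abbreviation fscale :: "'f::field \<Rightarrow> ('i \<Rightarrow> 'f) \<Rightarrow> 'i \<Rightarrow> 'f" where
  "fscale \<equiv> \<lambda>c u x. c * u x"

abbreviation flinear :: "(('i \<Rightarrow> 'f::field) \<Rightarrow> 'j \<Rightarrow> 'f) \<Rightarrow> bool" where
  "flinear \<equiv> Vector_Spaces.linear fscale fscale"

interpretation fv: vector_space "fscale :: 'f::field \<Rightarrow> ('i \<Rightarrow> 'f) \<Rightarrow> 'i \<Rightarrow> 'f"
  by unfold_locales (auto simp: fun_eq_iff algebra_simps)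

interpretation fvp: vector_space_pair
  "fscale :: 'f::field \<Rightarrow> ('i \<Rightarrow> 'f) \<Rightarrow> 'i \<Rightarrow> 'f" "fscale :: 'f::field \<Rightarrow> ('j \<Rightarrow> 'f) \<Rightarrow> 'j \<Rightarrow> 'f" ..

lemma flinearI:
  fixes f :: "('i \<Rightarrow> 'f::field) \<Rightarrow> 'j \<Rightarrow> 'f"
  assumes "\<And>u w. f (u + w) = f u + f w" and "\<And>c u. f (fscale c u) = fscale c (f u)"
  shows "flinear f"
  by (simp add: linear_iff assms fv.vector_space_axioms)

lemma lin_on_if_flinear: "flinear f \<Longrightarrow> lin_on I f"
  unfolding lin_on_def by (simp add: fvp.linear_add fvp.linear_scale fun_eq_iff)

lemma subspace_vecs: "fv.subspace (vecs I :: ('i \<Rightarrow> 'f::field) set)"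
  by (simp add: fv.subspace_def vecs_def)

definition unit_vec :: "'i \<Rightarrow> 'i \<Rightarrow> 'f::zero_neq_one" where
  "unit_vec a = (\<lambda>i. if i = a then 1 else 0)"

lemma unit_vec_in_vecs: "a \<in> I \<Longrightarrow> unit_vec a \<in> vecs I"
  by (simp add: vecs_def unit_vec_def)

lemma inj_unit_vec: "inj (unit_vec :: 'i \<Rightarrow> 'i \<Rightarrow> 'f::zero_neq_one)"
  by (rule injI) (metis unit_vec_def zero_neq_one)

lemma sum_fun_apply: "sum g A x = (\<Sum>a\<in>A. g a x)"
  by (induction A rule: infinite_finite_induct) auto

lemma vecs_eq_sum_unit_vec:
  fixes u :: "'i \<Rightarrow> 'f::field"
  assumes "finite I" "u \<in> vecs I"
  shows "u = (\<Sum>a\<in>I. fscale (u a) (unit_vec a))"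
  using assms by (auto simp: fun_eq_iff vecs_def unit_vec_def sum_fun_apply if_distrib cong: if_cong)

lemma independent_unit_vec:
  assumes "finite I"
  shows "fv.independent (unit_vec ` I :: ('i \<Rightarrow> 'f::field) set)"
proof (rule fv.independent_if_scalars_zero)
  fix c :: "('i \<Rightarrow> 'f) \<Rightarrow> 'f" and v :: "'i \<Rightarrow> 'f"
  assume sum0: "(\<Sum>v\<in>unit_vec ` I. fscale (c v) v) = 0" and "v \<in> unit_vec ` I"
  then obtain a where a: "a \<in> I" "v = unit_vec a" by blast
  have "0 = (\<Sum>b\<in>I. c (unit_vec b) * unit_vec b a)"
    using fun_cong[OF sum0, of a] by (simp add: sum_fun_apply sum.reindex inj_on_subset[OF inj_unit_vec])
  also have "\<dots> = c v"
    using assms a by (simp add: unit_vec_def if_distrib cong: if_cong)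
  finally show "c v = 0" by simp
qed (use assms in simp)

lemma span_unit_vec:
  assumes "finite I"
  shows "fv.span (unit_vec ` I) = (vecs I :: ('i \<Rightarrow> 'f::field) set)"
proof
  show "fv.span (unit_vec ` I) \<subseteq> (vecs I :: ('i \<Rightarrow> 'f) set)"
    by (rule fv.span_minimal) (auto intro: subspace_vecs unit_vec_in_vecs)
  show "vecs I \<subseteq> fv.span (unit_vec ` I :: ('i \<Rightarrow> 'f) set)"
  proof
    fix u :: "'i \<Rightarrow> 'f" assume "u \<in> vecs I"
    then have "u = (\<Sum>a\<in>I. fscale (u a) (unit_vec a))" by (rule vecs_eq_sum_unit_vec[OF assms])
    also have "\<dots> \<in> fv.span (unit_vec ` I)"
      by (intro fv.span_sum fv.span_scale fv.span_base) simp
    finally show "u \<in> fv.span (unit_vec ` I)" .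
  qed
qed

lemma card_unit_vec: "card (unit_vec ` I :: ('i \<Rightarrow> 'f::zero_neq_one) set) = card I"
  by (rule card_image[OF inj_on_subset[OF inj_unit_vec subset_UNIV]])

lemma card_le_card_if_flinear_inj:
  fixes f :: "('i \<Rightarrow> 'f::field) \<Rightarrow> 'j \<Rightarrow> 'f"
  assumes I: "finite I" and J: "finite J" and f: "flinear f"
    and into: "f ` vecs I \<subseteq> vecs J" and inj: "inj_on f (vecs I)"
  shows "card I \<le> card J"
proof -
  have sub: "unit_vec ` I \<subseteq> (vecs I :: ('i \<Rightarrow> 'f) set)"
    by (auto intro: unit_vec_in_vecs)
  have "fv.independent (f ` unit_vec ` I)"
    using fvp.linear_independent_injective_image[OF f independent_unit_vec[OF I]] inj
    unfolding span_unit_vec[OF I] by blast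
  moreover have "f ` unit_vec ` I \<subseteq> fv.span (unit_vec ` J)"
    unfolding span_unit_vec[OF J] using into sub by (meson image_mono order_trans)
  ultimately have "card (f ` unit_vec ` I) \<le> card (unit_vec ` J :: ('j \<Rightarrow> 'f) set)"
    using fv.independent_span_bound J by blast
  moreover have "card (f ` unit_vec ` I) = card (unit_vec ` I :: ('i \<Rightarrow> 'f) set)"
    using inj_on_subset[OF inj sub] by (rule card_image)
  ultimately show ?thesis unfolding card_unit_vec by linarith
qed

lemma card_le_card_if_flinear_onto:
  fixes f :: "('i \<Rightarrow> 'f::field) \<Rightarrow> 'j \<Rightarrow> 'f"
  assumes I: "finite I" and J: "finite J" and f: "flinear f" and onto: "vecs J \<subseteq> f ` vecs I"
  shows "card J \<le> card I"
proof -
  have "unit_vec ` J \<subseteq> (vecs J :: ('j \<Rightarrow> 'f) set)"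
    by (auto intro: unit_vec_in_vecs)
  also have "\<dots> \<subseteq> fv.span (f ` unit_vec ` I)"
    using onto unfolding fvp.linear_span_image[OF f] span_unit_vec[OF I] .
  finally have span: "unit_vec ` J \<subseteq> fv.span (f ` unit_vec ` I)" .
  have "card (unit_vec ` J :: ('j \<Rightarrow> 'f) set) \<le> card (f ` unit_vec ` I)"
    using fv.independent_span_bound[OF _ independent_unit_vec[OF J] span] I by simp
  also have "\<dots> \<le> card (unit_vec ` I :: ('i \<Rightarrow> 'f) set)"
    using I by (intro card_image_le) simp
  finally show ?thesis unfolding card_unit_vec .
qed

text \<open>A kernel vector with \<open>k a \<noteq> 0\<close> lets one drop the coordinate \<open>a\<close> without losing
  surjectivity.\<close>

lemma card_less_card_if_flinear_onto_kernel:
  fixes f :: "('i \<Rightarrow> 'f::field) \<Rightarrow> 'j \<Rightarrow> 'f"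
  assumes I: "finite I" and J: "finite J" and f: "flinear f" and onto: "vecs J \<subseteq> f ` vecs I"
    and k: "k \<in> vecs I" "k \<noteq> 0" "f k = 0"
  shows "card J < card I"
proof -
  obtain a where ka: "k a \<noteq> 0" using k(2) by (auto simp: fun_eq_iff)
  with k(1) have a: "a \<in> I" by (auto simp: vecs_def)
  have "vecs J \<subseteq> f ` vecs (I - {a})"
  proof
    fix z :: "'j \<Rightarrow> 'f" assume "z \<in> vecs J"
    with onto obtain u where u: "u \<in> vecs I" "z = f u" by blast
    define u' where "u' = u - fscale (u a / k a) k"
    have "u' \<in> vecs (I - {a})"
      using u(1) k(1) ka unfolding vecs_def u'_def by auto
    moreover have "f u' = z"
      unfolding u'_def fvp.linear_diff[OF f] fvp.linear_scale[OF f] k(3) u(2) by (simp add: fun_eq_iff)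
    ultimately show "z \<in> f ` vecs (I - {a})" by blast
  qed
  then have "card J \<le> card (I - {a})"
    using I J f by (intro card_le_card_if_flinear_onto) auto
  also have "\<dots> < card I" using I a by (rule card_Diff1_less)
  finally show ?thesis .
qed

lemma fdim_zero: "fdim {0 :: 'v \<Rightarrow> 'f::field} = 0"
proof -
  have "fv.dim {0 :: 'v \<Rightarrow> 'f} = fv.dim ({} :: ('v \<Rightarrow> 'f) set)"
    by (metis fv.dim_span fv.span_empty)
  then show ?thesis
    unfolding fdim_def using fv.dim_eq_card_independent[OF fv.independent_empty] by simp
qed

lemma fdim_line:
  fixes k :: "'v \<Rightarrow> 'f::field"
  assumes "k \<noteq> 0"
  shows "fdim (range (\<lambda>c. fscale c k)) = 1"
proof -
  have "fdim (range (\<lambda>c. fscale c k)) = fv.dim {k}"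
    unfolding fdim_def fv.span_singleton[symmetric] by (rule fv.dim_span)
  also have "\<dots> = card {k}"
    using assms by (intro fv.dim_eq_card_independent) (simp add: fv.independent_insert)
  finally show ?thesis by simp
qed

section \<open>Normal algebras whose product factors through a linear map\<close>

definition augment_at :: "'i \<Rightarrow> (('i \<Rightarrow> 'f) \<Rightarrow> 'j \<Rightarrow> 'f) \<Rightarrow> ('i \<Rightarrow> 'f) \<Rightarrow> 'j option \<Rightarrow> 'f" where
  "augment_at a h u = (\<lambda>x. case x of None \<Rightarrow> u a | Some j \<Rightarrow> h u j)"

lemma flinear_augment_at: "flinear h \<Longrightarrow> flinear (augment_at a h)"
  by (intro flinearI)
    (auto simp: augment_at_def fun_eq_iff fvp.linear_add fvp.linear_scale split: option.split)

lemma augment_at_image_subset: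
  "h ` vecs I \<subseteq> vecs J \<Longrightarrow> augment_at a h ` vecs I \<subseteq> vecs (insert None (Some ` J))"
  by (auto simp: augment_at_def vecs_def image_subset_iff split: option.split)

lemma inj_on_augment_at:
  fixes h :: "('i \<Rightarrow> 'f::field) \<Rightarrow> 'j \<Rightarrow> 'f"
  assumes h: "flinear h" and ker: "\<And>u. u \<in> vecs I \<Longrightarrow> h u = 0 \<Longrightarrow> u a = 0 \<Longrightarrow> u = 0"
  shows "inj_on (augment_at a h) (vecs I)"
proof -
  have "u = 0" if "u \<in> vecs I" "augment_at a h u = 0" for u
  proof (rule ker[OF that(1)])
    show "h u = 0" using fun_cong[OF that(2), of "Some _"] by (auto simp: augment_at_def fun_eq_iff)
    show "u a = 0" using fun_cong[OF that(2), of None] by (simp add: augment_at_def)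
  qed
  then show ?thesis
    using fvp.linear_inj_on_iff_eq_0[OF flinear_augment_at[OF h] subspace_vecs] by blast
qed

lemma vecs_subset_augment_at_image:
  fixes h :: "('i \<Rightarrow> 'f::field) \<Rightarrow> 'j \<Rightarrow> 'f"
  assumes h: "flinear h" and onto: "vecs J \<subseteq> h ` vecs I"
    and k: "k \<in> vecs I" "h k = 0" "k a = 1"
  shows "vecs (insert None (Some ` J)) \<subseteq> augment_at a h ` vecs I"
proof
  fix t :: "'j option \<Rightarrow> 'f" assume t: "t \<in> vecs (insert None (Some ` J))"
  then have "t \<circ> Some \<in> vecs J" by (auto simp: vecs_def)
  then obtain u where u: "u \<in> vecs I" "h u = t \<circ> Some"
    using onto by (metis imageE subsetD)
  define u' where "u' = u + fscale (t None - u a) k"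
  have "u' \<in> vecs I" unfolding u'_def
    using u(1) k(1) by (intro fv.subspace_add[OF subspace_vecs] fv.subspace_scale[OF subspace_vecs])
  moreover have "augment_at a h u' = t"
  proof
    fix x show "augment_at a h u' x = t x"
      using u(2) k(2,3) fun_cong[OF u(2)]
      by (cases x) (simp_all add: u'_def augment_at_def fvp.linear_add[OF h] fvp.linear_scale[OF h])
  qed
  ultimately show "t \<in> augment_at a h ` vecs I" by blast
qed

definition reindex :: "('k \<Rightarrow> 'j) \<Rightarrow> 'k set \<Rightarrow> ('j \<Rightarrow> 'f::zero) \<Rightarrow> 'k \<Rightarrow> 'f" where
  "reindex \<sigma> K z = (\<lambda>k. if k \<in> K then z (\<sigma> k) else 0)"

lemma flinear_reindex: "flinear (reindex \<sigma> K)"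
  by (intro flinearI) (auto simp: reindex_def fun_eq_iff)

lemma bij_betw_reindex:
  assumes \<sigma>: "bij_betw \<sigma> K J"
  shows "bij_betw (reindex \<sigma> K) (vecs J :: ('j \<Rightarrow> 'f::zero) set) (vecs K)"
proof (rule bij_betw_byWitness[where f' = "reindex (inv_into K \<sigma>) J"])
  have \<tau>: "bij_betw (inv_into K \<sigma>) J K" by (rule bij_betw_inv_into[OF \<sigma>])
  show "\<forall>z\<in>vecs J. reindex (inv_into K \<sigma>) J (reindex \<sigma> K z) = z"
    using bij_betw_inv_into_right[OF \<sigma>] bij_betw_apply[OF \<tau>]
    by (auto simp: reindex_def vecs_def fun_eq_iff)
  show "\<forall>t\<in>vecs K. reindex \<sigma> K (reindex (inv_into K \<sigma>) J t) = t"
    using bij_betw_inv_into_left[OF \<sigma>] bij_betw_apply[OF \<sigma>]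
    by (auto simp: reindex_def vecs_def fun_eq_iff)
  show "reindex \<sigma> K ` vecs J \<subseteq> vecs K" "reindex (inv_into K \<sigma>) J ` vecs K \<subseteq> vecs J"
    by (auto simp: reindex_def vecs_def)
qed

lemma sum_sum_diagonal_delta:
  fixes a b :: "'i \<Rightarrow> 'f::comm_ring_1"
  assumes "finite I" "c \<in> I"
  shows "(\<Sum>x\<in>I. \<Sum>y\<in>I. a x * b y * (if x = y \<and> y = c then 1 else 0)) = a c * b c"
proof -
  have "a x * b y * (if x = y \<and> y = c then 1 else 0) = (if y = c then (if x = c then a c * b c else 0) else 0)"
    for x y by auto
  then show ?thesis using assms by simp
qed

lemma nprod_On:
  "nprod (On n) a b = (\<lambda>j. if j < n then a j * b j else (0::'f::comm_ring_1))"
  by (auto simp: fun_eq_iff nprod_def On_def sum_sum_diagonal_delta)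

lemma UI_F0_On: "UI (nalg_sum F0 (On n)) = insert (Inl ()) (Inr ` {..<n})"
  by (auto simp: nalg_sum_def F0_def On_def)

lemma ZI_F0_On: "ZI (nalg_sum F0 (On n)) = Inr ` {..<n}"
  by (simp add: nalg_sum_def F0_def On_def)

lemma nprod_F0_On:
  "nprod (nalg_sum F0 (On n)) a b
     = (\<lambda>i. case i of Inl _ \<Rightarrow> 0 | Inr j \<Rightarrow> if j < n then a (Inr j) * b (Inr j) else (0::'f::comm_ring_1))"
proof
  fix i :: "nat + nat"
  have sc: "sc (nalg_sum F0 (On n)) x y (Inr j) = (if x = y \<and> y = Inr j then 1 else 0)" for x y j
    by (cases x; cases y) (auto simp: nalg_sum_def On_def)
  show "nprod (nalg_sum F0 (On n)) a b i
     = (case i of Inl _ \<Rightarrow> 0 | Inr j \<Rightarrow> if j < n then a (Inr j) * b (Inr j) else 0)"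
    by (cases i) (auto simp: nprod_def UI_F0_On ZI_F0_On sc sum_sum_diagonal_delta)
qed

lemma nalg_iso_On_if_nprod_factors:
  fixes A :: "('i, 'j, 'f::field) nalg" and h :: "('i \<Rightarrow> 'f) \<Rightarrow> 'j \<Rightarrow> 'f"
  assumes fin: "finite (ZI A)"
    and h: "flinear h" "bij_betw h (vecs (UI A)) (vecs (ZI A))"
    and prod: "\<And>u w. u \<in> vecs (UI A) \<Longrightarrow> w \<in> vecs (UI A) \<Longrightarrow> nprod A u w = h u * h w"
    and n: "card (ZI A) = n"
  shows "nalg_iso A (On n)"
proof -
  let ?n = "card (ZI A)"
  obtain \<sigma> where \<sigma>: "bij_betw \<sigma> {..<?n} (ZI A)"
    using ex_bij_betw_nat_finite[OF fin] by (auto simp: atLeast0LessThan)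
  let ?g = "reindex \<sigma> {..<?n} :: ('j \<Rightarrow> 'f) \<Rightarrow> nat \<Rightarrow> 'f"
  have "flinear (?g \<circ> h)"
    by (rule Vector_Spaces.linear_compose[OF h(1) flinear_reindex])
  moreover have "bij_betw (?g \<circ> h) (vecs (UI A)) (vecs {..<?n})"
    by (rule bij_betw_trans[OF h(2) bij_betw_reindex[OF \<sigma>]])
  moreover have "?g (nprod A u w) = nprod (On ?n) ((?g \<circ> h) u) ((?g \<circ> h) w)"
    if "u \<in> vecs (UI A)" "w \<in> vecs (UI A)" for u w
    using prod[OF that] by (simp add: nprod_On reindex_def fun_eq_iff)
  ultimately show ?thesis
    unfolding nalg_iso_def n[symmetric] using bij_betw_reindex[OF \<sigma>]
    by (intro exI[of _ "?g \<circ> h"] exI[of _ ?g]) (simp add: On_def lin_on_if_flinear flinear_reindex)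
qed

text \<open>The coordinate \<open>u a\<close> recorded by \<^const>\<open>augment_at\<close> spans the summand \<open>F\<^sup>0\<close>.\<close>

lemma nalg_iso_F0_On_if_nprod_factors:
  fixes A :: "('i, 'j, 'f::field) nalg" and h :: "('i \<Rightarrow> 'f) \<Rightarrow> 'j \<Rightarrow> 'f"
  assumes fin: "finite (ZI A)"
    and h: "flinear h" "h ` vecs (UI A) \<subseteq> vecs (ZI A)" "vecs (ZI A) \<subseteq> h ` vecs (UI A)"
    and k: "k \<in> vecs (UI A)" "h k = 0" "k a = 1"
    and ker: "\<And>u. u \<in> vecs (UI A) \<Longrightarrow> h u = 0 \<Longrightarrow> u a = 0 \<Longrightarrow> u = 0"
    and prod: "\<And>u w. u \<in> vecs (UI A) \<Longrightarrow> w \<in> vecs (UI A) \<Longrightarrow> nprod A u w = h u * h w"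
    and n: "card (ZI A) = n"
  shows "nalg_iso A (nalg_sum F0 (On n))"
proof -
  let ?n = "card (ZI A)"
  obtain \<sigma> where \<sigma>: "bij_betw \<sigma> {..<?n} (ZI A)"
    using ex_bij_betw_nat_finite[OF fin] by (auto simp: atLeast0LessThan)
  define \<rho> :: "unit + nat \<Rightarrow> 'j option" where "\<rho> = case_sum (\<lambda>_. None) (Some \<circ> \<sigma>)"
  have \<rho>: "bij_betw \<rho> (insert (Inl ()) (Inr ` {..<?n})) (insert None (Some ` ZI A))"
    using \<sigma> by (auto simp: bij_betw_def inj_on_def \<rho>_def image_image)
  have \<sigma>': "bij_betw (\<sigma> \<circ> projr) (Inr ` {..<?n}) (ZI A)"
    using \<sigma> by (auto simp: bij_betw_def inj_on_def image_image)
  have aug: "bij_betw (augment_at a h) (vecs (UI A)) (vecs (insert None (Some ` ZI A)))"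
    unfolding bij_betw_def
  proof
    show "inj_on (augment_at a h) (vecs (UI A))" by (rule inj_on_augment_at[of h, OF h(1) ker])
    show "augment_at a h ` vecs (UI A) = vecs (insert None (Some ` ZI A))"
    proof (rule subset_antisym)
      show "augment_at a h ` vecs (UI A) \<subseteq> vecs (insert None (Some ` ZI A))"
        using h(2) by (rule augment_at_image_subset)
      show "vecs (insert None (Some ` ZI A)) \<subseteq> augment_at a h ` vecs (UI A)"
        by (rule vecs_subset_augment_at_image[of h, OF h(1) h(3) k])
    qed
  qed
  let ?f = "reindex \<rho> (insert (Inl ()) (Inr ` {..<?n})) \<circ> augment_at a h"
  let ?g = "reindex (\<sigma> \<circ> projr) (Inr ` {..<?n}) :: ('j \<Rightarrow> 'f) \<Rightarrow> nat + nat \<Rightarrow> 'f"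
  have "flinear ?f"
    by (rule Vector_Spaces.linear_compose[OF flinear_augment_at[OF h(1)] flinear_reindex])
  moreover have "bij_betw ?f (vecs (UI A)) (vecs (insert (Inl ()) (Inr ` {..<?n})))"
    by (rule bij_betw_trans[OF aug bij_betw_reindex[OF \<rho>]])
  moreover have "?g (nprod A u w) = nprod (nalg_sum F0 (On ?n)) (?f u) (?f w)"
    if "u \<in> vecs (UI A)" "w \<in> vecs (UI A)" for u w
    using prod[OF that]
    by (auto simp: nprod_F0_On reindex_def augment_at_def \<rho>_def fun_eq_iff split: sum.split)
  ultimately show ?thesis
    unfolding nalg_iso_def UI_F0_On ZI_F0_On n[symmetric] using bij_betw_reindex[OF \<sigma>']
    by (intro exI[of _ ?f] exI[of _ ?g]) (simp add: lin_on_if_flinear flinear_reindex)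
qed

section \<open>The incidence map of a graph\<close>

lemma simple_graphD:
  assumes "simple_graph V E" "E x y"
  shows "x \<in> V" "y \<in> V" "x \<noteq> y" "E y x"
  using assms unfolding simple_graph_def by blast+

lemma edges_memI: "simple_graph V E \<Longrightarrow> E x y \<Longrightarrow> {x, y} \<in> edges V E"
  unfolding simple_graph_def edges_def by blast

lemma edges_memE:
  assumes "simple_graph V E" "e \<in> edges V E"
  obtains x y where "e = {x, y}" "E x y"
  using assms unfolding edges_def by blast

lemma edge_subset_vertices: "simple_graph V E \<Longrightarrow> e \<in> edges V E \<Longrightarrow> e \<subseteq> V"
  unfolding simple_graph_def edges_def by blast

lemma finite_edges:
  assumes "simple_graph V E"
  shows "finite (edges V E)"
proof (rule finite_subset)
  show "edges V E \<subseteq> Pow V" using edge_subset_vertices[OF assms] by blast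
  show "finite (Pow V)" using assms by (simp add: simple_graph_def)
qed

lemma UI_graph_alg [simp]: "UI (graph_alg V E) = V"
  and ZI_graph_alg [simp]: "ZI (graph_alg V E) = edges V E"
  by (simp_all add: graph_alg_def)

definition incidence :: "'v set \<Rightarrow> ('v \<Rightarrow> 'v \<Rightarrow> bool) \<Rightarrow> ('v \<Rightarrow> 'f::comm_ring_1) \<Rightarrow> 'v set \<Rightarrow> 'f" where
  "incidence V E u = (\<lambda>e. if e \<in> edges V E then sum u e else 0)"

lemma flinear_incidence: "flinear (incidence V E)"
  by (intro flinearI) (auto simp: incidence_def fun_eq_iff sum.distrib sum_distrib_left)

lemma incidence_in_vecs: "incidence V E u \<in> vecs (edges V E)"
  by (simp add: incidence_def vecs_def)

lemma incidence_edge: "simple_graph V E \<Longrightarrow> E x y \<Longrightarrow> incidence V E u {x, y} = u x + u y"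
  by (simp add: incidence_def edges_memI simple_graphD(3))

lemma nprod_graph_alg:
  fixes u w :: "'v \<Rightarrow> 'f::comm_ring_1"
  assumes G: "simple_graph V E"
  shows "nprod (graph_alg V E) u w = incidence V E u * incidence V E w"
proof
  fix e
  show "nprod (graph_alg V E) u w e = (incidence V E u * incidence V E w) e"
  proof (cases "e \<in> edges V E")
    case True
    have V: "finite V" using G by (simp add: simple_graph_def)
    have restrict: "(\<Sum>a\<in>V. if a \<in> e then g a else 0) = sum g e" for g :: "'v \<Rightarrow> 'f"
      using sum.inter_restrict[OF V, of g e] edge_subset_vertices[OF G True] by (simp add: Int_absorb1)
    have "(\<Sum>a\<in>V. \<Sum>b\<in>V. u a * w b * (if a \<in> e \<and> b \<in> e then 1 else 0))
        = (\<Sum>a\<in>V. if a \<in> e then u a else 0) * (\<Sum>b\<in>V. if b \<in> e then w b else 0)"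
      unfolding sum_product by (intro sum.cong) auto
    then show ?thesis using True by (simp add: nprod_def graph_alg_def incidence_def restrict)
  qed (simp add: nprod_def graph_alg_def incidence_def)
qed

lemma ann_graph_eq_kernel:
  assumes G: "simple_graph V E"
  shows "ann_graph TYPE('f::comm_ring_1) V E = {u \<in> vecs V. incidence V E u = (0 :: 'v set \<Rightarrow> 'f)}"
proof (intro set_eqI iffI)
  fix u :: "'v \<Rightarrow> 'f"
  assume u: "u \<in> ann_graph TYPE('f) V E"
  have "incidence V E u e = 0" for e
  proof (cases "e \<in> edges V E")
    case True
    then obtain x y where xy: "e = {x, y}" "E x y" by (rule edges_memE[OF G])
    have "unit_vec x \<in> vecs V" using simple_graphD(1)[OF G xy(2)] by (rule unit_vec_in_vecs)
    with u have "incidence V E u e * incidence V E (unit_vec x) e = 0"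
      by (auto simp: ann_graph_def nprod_graph_alg[OF G] dest!: bspec fun_cong[of _ _ e])
    moreover have "incidence V E (unit_vec x :: 'v \<Rightarrow> 'f) e = 1"
      using xy(1) incidence_edge[OF G xy(2), of "unit_vec x"] simple_graphD(3)[OF G xy(2)]
      by (simp add: unit_vec_def)
    ultimately show ?thesis by simp
  qed (simp add: incidence_def)
  with u show "u \<in> {u \<in> vecs V. incidence V E u = 0}" by (auto simp: ann_graph_def)
qed (auto simp: ann_graph_def nprod_graph_alg[OF G])

text \<open>If \<open>u\<^sup>2\<close> is the basis vector \<open>e\<close>, the incidence vector of \<open>u\<close> is \<open>\<pm>1\<close> at \<open>e\<close> and
  vanishes elsewhere, so rescaling \<open>u\<close> by that sign hits the unit vector of \<open>e\<close>.\<close>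

lemma unit_vec_in_incidence_image:
  assumes G: "simple_graph V E" and esq: "edge_square TYPE('f::field) V E" and e: "e \<in> edges V E"
  shows "unit_vec e \<in> incidence V E ` (vecs V :: ('v \<Rightarrow> 'f) set)"
proof -
  obtain u :: "'v \<Rightarrow> 'f" where u: "u \<in> vecs V" "incidence V E u * incidence V E u = unit_vec e"
    using esq e unfolding edge_square_def nprod_graph_alg[OF G] unit_vec_def by blast
  define s where "s = incidence V E u e"
  have sq: "incidence V E u d * incidence V E u d = (if d = e then 1 else 0)" for d
    using fun_cong[OF u(2), of d] by (simp add: unit_vec_def)
  have "incidence V E (fscale s u) = unit_vec e"
  proof
    fix d show "incidence V E (fscale s u) d = unit_vec e d"
      using sq[of d] sq[of e]
      by (cases "d = e") (simp_all add: fvp.linear_scale[OF flinear_incidence] unit_vec_def s_def)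
  qed
  moreover have "fscale s u \<in> vecs V" using u(1) by (rule fv.subspace_scale[OF subspace_vecs])
  ultimately show ?thesis by (metis image_eqI)
qed

lemma incidence_onto_if_edge_square:
  assumes G: "simple_graph V E" and esq: "edge_square TYPE('f::field) V E"
  shows "vecs (edges V E) \<subseteq> incidence V E ` (vecs V :: ('v \<Rightarrow> 'f) set)"
proof -
  have "vecs (edges V E) = fv.span (unit_vec ` edges V E :: ('v set \<Rightarrow> 'f) set)"
    by (rule span_unit_vec[OF finite_edges[OF G], symmetric])
  also have "\<dots> \<subseteq> incidence V E ` vecs V"
    using unit_vec_in_incidence_image[OF G esq]
    by (intro fv.span_minimal fvp.linear_subspace_image[OF flinear_incidence subspace_vecs]) auto
  finally show ?thesis .
qed

lemma rtranclp_if_walk: "is_walk E xs \<Longrightarrow> E\<^sup>*\<^sup>* (hd xs) (last xs)"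
proof (induction xs)
  case (Cons x xs)
  show ?case
  proof (cases xs)
    case (Cons y ys)
    have "E x y" using Cons.prems \<open>xs = y # ys\<close> unfolding is_walk_def by fastforce
    moreover have "is_walk E xs" using Cons.prems \<open>xs = y # ys\<close> by (auto simp: is_walk_def)
    ultimately show ?thesis using Cons.IH \<open>xs = y # ys\<close> by (simp add: converse_rtranclp_into_rtranclp)
  qed simp
qed (simp add: is_walk_def)

lemma connected_graph_rtranclp: "connected_graph V E \<Longrightarrow> x \<in> V \<Longrightarrow> y \<in> V \<Longrightarrow> E\<^sup>*\<^sup>* x y"
  unfolding connected_graph_def using rtranclp_if_walk by metis

text \<open>A kernel vector of the incidence map changes sign along every edge.\<close>

lemma incidence_kernel_eq_0_if_vanishes:
  fixes u :: "'v \<Rightarrow> 'f::field"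
  assumes G: "simple_graph V E" and reach: "\<forall>x\<in>V. E\<^sup>*\<^sup>* a x"
    and u: "u \<in> vecs V" "incidence V E u = 0" "u a = 0"
  shows "u = 0"
proof
  fix x
  show "u x = 0 x"
  proof (cases "x \<in> V")
    case True
    have "E\<^sup>*\<^sup>* a x" using reach True by blast
    then show ?thesis
    proof (induction rule: rtranclp_induct)
      case (step y z)
      have "u y + u z = 0" using incidence_edge[OF G step.hyps(2)] u(2) by (metis zero_fun_apply)
      with step.IH show ?case by simp
    qed (simp add: u(3))
  qed (use u(1) in \<open>simp add: vecs_def\<close>)
qed

lemma incidence_kernel_eq_line:
  fixes k :: "'v \<Rightarrow> 'f::field"
  assumes G: "simple_graph V E" and reach: "\<forall>x\<in>V. E\<^sup>*\<^sup>* a x"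
    and k: "k \<in> vecs V" "incidence V E k = 0" "k a = 1"
  shows "{u \<in> vecs V. incidence V E u = 0} = range (\<lambda>c. fscale c k)"
proof (intro set_eqI iffI)
  fix u :: "'v \<Rightarrow> 'f" assume "u \<in> {u \<in> vecs V. incidence V E u = 0}"
  then have u: "u \<in> vecs V" "incidence V E u = 0" by simp_all
  have "u - fscale (u a) k \<in> vecs V"
    using u(1) k(1) by (intro fv.subspace_diff[OF subspace_vecs] fv.subspace_scale[OF subspace_vecs])
  moreover have "incidence V E (u - fscale (u a) k) = 0"
    unfolding fvp.linear_diff[OF flinear_incidence] fvp.linear_scale[OF flinear_incidence] u(2) k(2)
    by (simp add: zero_fun_def)
  moreover have "(u - fscale (u a) k) a = 0" using k(3) by simp
  ultimately have "u - fscale (u a) k = 0" by (rule incidence_kernel_eq_0_if_vanishes[OF G reach])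
  then have "u = fscale (u a) k" by simp
  then show "u \<in> range (\<lambda>c. fscale c k)" by (rule range_eqI)
next
  fix u :: "'v \<Rightarrow> 'f" assume "u \<in> range (\<lambda>c. fscale c k)"
  then obtain c where "u = fscale c k" by blast
  then show "u \<in> {u \<in> vecs V. incidence V E u = 0}"
    using fv.subspace_scale[OF subspace_vecs k(1)] k(2)
    by (simp add: fvp.linear_scale[OF flinear_incidence] zero_fun_def)
qed

lemma card_vertices_le_Suc_card_edges:
  fixes V :: "'v set"
  assumes G: "simple_graph V E" and a: "a \<in> V" and reach: "\<forall>x\<in>V. E\<^sup>*\<^sup>* a x"
  shows "card V \<le> card (edges V E) + 1"
proof -
  let ?h = "incidence V E :: ('v \<Rightarrow> rat) \<Rightarrow> 'v set \<Rightarrow> rat"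
  have "card V \<le> card (insert None (Some ` edges V E))"
  proof (rule card_le_card_if_flinear_inj)
    show "finite V" using G by (simp add: simple_graph_def)
    show "finite (insert None (Some ` edges V E))" using finite_edges[OF G] by simp
    show "flinear (augment_at a ?h)" by (rule flinear_augment_at[OF flinear_incidence])
    show "augment_at a ?h ` vecs V \<subseteq> vecs (insert None (Some ` edges V E))"
      by (rule augment_at_image_subset) (auto intro: incidence_in_vecs)
    show "inj_on (augment_at a ?h) (vecs V)"
      using incidence_kernel_eq_0_if_vanishes[OF G reach]
      by (intro inj_on_augment_at[of ?h, OF flinear_incidence]) auto
  qed
  also have "\<dots> = card (edges V E) + 1" using finite_edges[OF G] by (simp add: card_image)
  finally show ?thesis .
qed

section \<open>Cycles\<close>

definition cycle_edge :: "'v list \<Rightarrow> nat \<Rightarrow> 'v set" where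
  "cycle_edge xs i = {xs ! i, xs ! (Suc i mod length xs)}"

lemma cycle_edges_eq_image: "cycle_edges xs = cycle_edge xs ` {..<length xs}"
  by (auto simp: cycle_edges_def cycle_edge_def)

lemma cycle_adjacent:
  "is_cycle_list E xs \<Longrightarrow> i < length xs \<Longrightarrow> E (xs ! i) (xs ! (Suc i mod length xs))"
  unfolding is_cycle_list_def by blast

lemma cycle_length_ge_3: "is_cycle_list E xs \<Longrightarrow> 3 \<le> length xs"
  unfolding is_cycle_list_def by blast

lemma cycle_edge_in_edges:
  assumes "simple_graph V E" "is_cycle_list E xs" "i < length xs"
  shows "cycle_edge xs i \<in> edges V E"
  unfolding cycle_edge_def by (rule edges_memI[OF assms(1) cycle_adjacent[OF assms(2,3)]])

lemma incidence_cycle_edge: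
  assumes "simple_graph V E" "is_cycle_list E xs" "i < length xs"
  shows "incidence V E u (cycle_edge xs i) = u (xs ! i) + u (xs ! (Suc i mod length xs))"
  unfolding cycle_edge_def by (rule incidence_edge[OF assms(1) cycle_adjacent[OF assms(2,3)]])

text \<open>Equal edges with indices \<open>i \<noteq> j\<close> would force \<open>i = (i + 2) mod n\<close>, impossible
  for \<open>n \<ge> 3\<close>.\<close>

lemma inj_on_cycle_edge:
  assumes c: "is_cycle_list E xs"
  shows "inj_on (cycle_edge xs) {..<length xs}"
proof (rule inj_onI, rule ccontr)
  let ?n = "length xs"
  fix i j assume i: "i \<in> {..<?n}" and j: "j \<in> {..<?n}" and eq: "cycle_edge xs i = cycle_edge xs j"
    and ij: "i \<noteq> j"
  have d: "distinct xs" and n: "3 \<le> ?n" using c by (auto simp: is_cycle_list_def)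
  have "xs ! i \<noteq> xs ! j" using d i j ij by (simp add: nth_eq_iff_index_eq)
  then have "xs ! i = xs ! (Suc j mod ?n)" "xs ! (Suc i mod ?n) = xs ! j"
    using eq by (auto simp: cycle_edge_def doubleton_eq_iff)
  moreover have "Suc i mod ?n < ?n" "Suc j mod ?n < ?n"
    using n by (simp_all only: mod_less_divisor[of ?n] less_le_trans[OF _ n])
  ultimately have "i = Suc j mod ?n" "Suc i mod ?n = j"
    using d i j by (simp_all add: nth_eq_iff_index_eq)
  then have "i = Suc (Suc i mod ?n) mod ?n" by simp
  also have "\<dots> = Suc (Suc i) mod ?n" by (rule mod_Suc_eq)
  finally have "Suc (Suc i) mod ?n = i mod ?n" using i by simp
  then have "?n dvd Suc (Suc i) - i" by (simp add: mod_eq_dvd_iff_nat)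
  with n show False by (auto dest: dvd_imp_le)
qed

lemma card_cycle_edges: "is_cycle_list E xs \<Longrightarrow> card (cycle_edges xs) = length xs"
  by (simp add: cycle_edges_eq_image card_image inj_on_cycle_edge)

lemma alternating_sign:
  fixes f :: "nat \<Rightarrow> 'a::ring_1"
  assumes "a \<le> b" and "\<And>i. a \<le> i \<Longrightarrow> i < b \<Longrightarrow> f (Suc i) = - f i"
  shows "f b = (-1) ^ (b - a) * f a"
  using assms
proof (induction b rule: dec_induct)
  case (step b)
  then show ?case by (simp add: Suc_diff_le)
qed simp

lemma cycle_alternation:
  fixes u :: "'v \<Rightarrow> 'a::ring_1"
  assumes c: "is_cycle_list E xs"
    and alt: "\<And>i. 0 < i \<Longrightarrow> i < length xs \<Longrightarrow> u (xs ! i) + u (xs ! (Suc i mod length xs)) = 0"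
  shows "u (xs ! 0) = (-1) ^ (length xs - 1) * u (xs ! 1)"
proof -
  let ?n = "length xs"
  have n: "3 \<le> ?n" by (rule cycle_length_ge_3[OF c])
  have "u (xs ! (?n mod ?n)) = (-1) ^ (?n - 1) * u (xs ! (1 mod ?n))"
  proof (rule alternating_sign[where f = "\<lambda>i. u (xs ! (i mod ?n))"])
    fix i assume "1 \<le> i" "i < ?n"
    then show "u (xs ! (Suc i mod ?n)) = - u (xs ! (i mod ?n))"
      using alt[of i] by (simp add: eq_neg_iff_add_eq_0 add.commute)
  qed (use n in simp)
  then show ?thesis using n by simp
qed

text \<open>Take \<open>u\<close> with \<open>\<iota> u\<close> the unit vector of the edge \<open>{x\<^sub>0, x\<^sub>1}\<close>. Along the other edges
  \<open>u\<close> alternates in sign, which for an even cycle gives \<open>u x\<^sub>0 + u x\<^sub>1 = 0\<close>.\<close>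

lemma odd_cycle_if_edge_square:
  fixes V :: "'v set"
  assumes G: "simple_graph V E" and esq: "edge_square TYPE('f::field) V E"
    and c: "is_cycle_list E xs"
  shows "odd (length xs)"
proof
  assume even: "even (length xs)"
  let ?n = "length xs"
  have n: "3 \<le> ?n" by (rule cycle_length_ge_3[OF c])
  then have "0 < ?n" by linarith
  then have "cycle_edge xs 0 \<in> edges V E" by (rule cycle_edge_in_edges[OF G c])
  then obtain u :: "'v \<Rightarrow> 'f" where u: "incidence V E u = unit_vec (cycle_edge xs 0)"
    using unit_vec_in_incidence_image[OF G esq] by (metis imageE)
  have "u (xs ! 0) = (-1) ^ (?n - 1) * u (xs ! 1)"
  proof (rule cycle_alternation[OF c])
    fix i assume "0 < i" "i < ?n"
    then have "cycle_edge xs i \<noteq> cycle_edge xs 0"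
      using inj_on_cycle_edge[OF c] \<open>0 < ?n\<close> by (auto dest: inj_onD)
    then have "incidence V E u (cycle_edge xs i) = 0" by (simp add: u unit_vec_def)
    then show "u (xs ! i) + u (xs ! (Suc i mod ?n)) = 0"
      by (simp add: incidence_cycle_edge[OF G c \<open>i < ?n\<close>])
  qed
  moreover have "odd (?n - 1)" using even n by presburger
  ultimately have "u (xs ! 0) = - u (xs ! 1)" by simp
  moreover have "u (xs ! 0) + u (xs ! 1) = 1"
    using incidence_cycle_edge[OF G c \<open>0 < ?n\<close>, of u] n by (simp add: u unit_vec_def)
  ultimately show False by simp
qed

lemma incidence_kernel_trivial_if_odd_cycle:
  fixes u :: "'v \<Rightarrow> 'f::field"
  assumes char: "(2::'f) \<noteq> 0" and G: "simple_graph V E" and conn: "connected_graph V E"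
    and c: "is_cycle_list E xs" and odd: "odd (length xs)"
    and u: "u \<in> vecs V" "incidence V E u = 0"
  shows "u = 0"
proof -
  let ?n = "length xs"
  have n: "3 \<le> ?n" by (rule cycle_length_ge_3[OF c])
  then have "0 < ?n" by linarith
  have "u (xs ! 0) = (-1) ^ (?n - 1) * u (xs ! 1)"
  proof (rule cycle_alternation[OF c])
    fix i assume "0 < i" "i < ?n"
    then show "u (xs ! i) + u (xs ! (Suc i mod ?n)) = 0"
      using incidence_cycle_edge[OF G c \<open>i < ?n\<close>, of u] u(2) by simp
  qed
  moreover have "even (?n - 1)" using odd n by presburger
  ultimately have eq: "u (xs ! 0) = u (xs ! 1)" by simp
  have "u (xs ! 0) + u (xs ! 1) = 0"
    using incidence_cycle_edge[OF G c \<open>0 < ?n\<close>, of u] u(2) n by simp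
  then have "2 * u (xs ! 0) = 0" by (metis eq mult_2)
  with char have u0: "u (xs ! 0) = 0" by simp
  have "xs ! 0 \<in> V" using simple_graphD(1)[OF G cycle_adjacent[OF c \<open>0 < ?n\<close>]] .
  then have "\<forall>x\<in>V. E\<^sup>*\<^sup>* (xs ! 0) x" using connected_graph_rtranclp[OF conn] by blast
  from incidence_kernel_eq_0_if_vanishes[OF G this u u0] show ?thesis .
qed

definition delete_edge :: "('v \<Rightarrow> 'v \<Rightarrow> bool) \<Rightarrow> 'v set \<Rightarrow> 'v \<Rightarrow> 'v \<Rightarrow> bool" where
  "delete_edge E e = (\<lambda>x y. E x y \<and> {x, y} \<noteq> e)"

lemma simple_graph_delete_edge: "simple_graph V E \<Longrightarrow> simple_graph V (delete_edge E e)"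
  unfolding simple_graph_def delete_edge_def by (auto simp: insert_commute)

lemma edges_delete_edge: "edges V (delete_edge E e) = edges V E - {e}"
  unfolding edges_def delete_edge_def by auto

lemma is_cycle_list_delete_edge:
  "is_cycle_list E xs \<Longrightarrow> e \<notin> cycle_edges xs \<Longrightarrow> is_cycle_list (delete_edge E e) xs"
  unfolding is_cycle_list_def delete_edge_def cycle_edges_def by blast

lemma rtranclp_chain:
  assumes "a \<le> b" and "\<And>j. a \<le> j \<Longrightarrow> j < b \<Longrightarrow> R (f j) (f (Suc j))"
  shows "R\<^sup>*\<^sup>* (f a) (f b)"
  using assms by (induction b rule: dec_induct) (auto intro: rtranclp.rtrancl_into_rtrancl)

text \<open>The endpoints of a deleted cycle edge stay connected the long way round the cycle.\<close>

lemma cycle_edge_rtranclp_delete_edge: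
  assumes c: "is_cycle_list E xs" and i: "i < length xs"
  shows "(delete_edge E (cycle_edge xs i))\<^sup>*\<^sup>* (xs ! (Suc i mod length xs)) (xs ! i)"
proof -
  let ?n = "length xs" and ?R = "delete_edge E (cycle_edge xs i)"
  have "?R\<^sup>*\<^sup>* (xs ! (Suc i mod ?n)) (xs ! ((i + ?n) mod ?n))"
  proof (rule rtranclp_chain[where f = "\<lambda>j. xs ! (j mod ?n)"])
    fix j assume j: "Suc i \<le> j" "j < i + ?n"
    have "j mod ?n \<noteq> i"
    proof
      assume "j mod ?n = i"
      with i have "j mod ?n = i mod ?n" by simp
      then have "?n dvd j - i" using j by (simp add: mod_eq_dvd_iff_nat)
      with j show False by (auto dest: dvd_imp_le)
    qed
    moreover have "j mod ?n < ?n" using i by (intro mod_less_divisor) linarith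
    ultimately have "cycle_edge xs (j mod ?n) \<noteq> cycle_edge xs i"
      using inj_on_cycle_edge[OF c] i by (auto dest: inj_onD)
    then show "?R (xs ! (j mod ?n)) (xs ! (Suc j mod ?n))"
      using cycle_adjacent[OF c \<open>j mod ?n < ?n\<close>]
      by (simp add: delete_edge_def cycle_edge_def mod_Suc_eq)
  qed (use i in linarith)
  then show ?thesis using i by simp
qed

lemma rtranclp_delete_cycle_edge:
  assumes G: "simple_graph V E" and c: "is_cycle_list E xs" and e: "e \<in> cycle_edges xs"
  shows "(delete_edge E e)\<^sup>*\<^sup>* = E\<^sup>*\<^sup>*"
proof -
  obtain i where i: "i < length xs" "e = cycle_edge xs i"
    using e by (auto simp: cycle_edges_eq_image)
  have sym: "symp (delete_edge E e)\<^sup>*\<^sup>*"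
    using simple_graphD(4)[OF simple_graph_delete_edge[OF G]] by (intro symp_rtranclp sympI)
  have "(delete_edge E e)\<^sup>*\<^sup>* x y" if "E x y" for x y
  proof (cases "{x, y} = e")
    case True
    then have "{x, y} = {xs ! (Suc i mod length xs), xs ! i}" by (simp add: i(2) cycle_edge_def insert_commute)
    then show ?thesis
      using cycle_edge_rtranclp_delete_edge[OF c i(1)] sympD[OF sym] i(2)
      by (auto simp: doubleton_eq_iff)
  qed (use that in \<open>simp add: delete_edge_def r_into_rtranclp\<close>)
  then have "E \<le> (delete_edge E e)\<^sup>*\<^sup>*" by blast
  moreover have "delete_edge E e \<le> E" by (auto simp: delete_edge_def)
  ultimately show ?thesis by (simp add: rtranclp_subset)
qed

text \<open>Deleting one edge from each of two different cycles keeps the graph connected.\<close>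

lemma card_vertices_less_card_edges_if_two_cycles:
  assumes G: "simple_graph V E" and a: "a \<in> V" and reach: "\<forall>x\<in>V. E\<^sup>*\<^sup>* a x"
    and C: "C \<in> cycles E" "C' \<in> cycles E" "C \<noteq> C'"
  shows "card V + 1 \<le> card (edges V E)"
proof -
  obtain xs ys e where xs: "is_cycle_list E xs" and ys: "is_cycle_list E ys"
    and e: "e \<in> cycle_edges xs" "e \<notin> cycle_edges ys"
    using C unfolding cycles_def by blast
  let ?E1 = "delete_edge E e"
  let ?d = "cycle_edge ys 0"
  let ?E2 = "delete_edge ?E1 ?d"
  have G1: "simple_graph V ?E1" by (rule simple_graph_delete_edge[OF G])
  have ys1: "is_cycle_list ?E1 ys" by (rule is_cycle_list_delete_edge[OF ys e(2)])
  have n: "0 < length ys" using cycle_length_ge_3[OF ys] by linarith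
  have d: "?d \<in> cycle_edges ys" using n by (auto simp: cycle_edges_eq_image)
  have "?E2\<^sup>*\<^sup>* = E\<^sup>*\<^sup>*"
    using rtranclp_delete_cycle_edge[OF G1 ys1 d] rtranclp_delete_cycle_edge[OF G xs e(1)] by simp
  then have "card V \<le> card (edges V ?E2) + 1"
    using card_vertices_le_Suc_card_edges[OF simple_graph_delete_edge[OF G1] a] reach by simp
  moreover have "card (edges V ?E2) + 2 = card (edges V E)"
  proof -
    have "e \<in> edges V E" using e(1) cycle_edge_in_edges[OF G xs]
      by (auto simp: cycle_edges_eq_image)
    moreover have d_mem: "?d \<in> edges V E - {e}"
      using cycle_edge_in_edges[OF G1 ys1 n] by (simp add: edges_delete_edge)
    ultimately have sub: "{e, ?d} \<subseteq> edges V E" by blast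
    have "e \<noteq> ?d" using d_mem by blast
    then have two: "card {e, ?d} = 2" by simp
    have "edges V ?E2 = edges V E - {e, ?d}" by (auto simp: edges_delete_edge)
    then show ?thesis
      using card_Diff_subset[OF _ sub] card_mono[OF finite_edges[OF G] sub] two by simp
  qed
  ultimately show ?thesis by linarith
qed

text \<open>Take a longest path \<open>ys\<close>: the first vertex has a second neighbour besides
  \<open>ys ! 1\<close>, and by maximality it lies on the path, closing a cycle.\<close>

lemma cycle_if_every_edge_extends:
  assumes G: "simple_graph V E" and ab: "E a b"
    and extend: "\<And>x y. E x y \<Longrightarrow> \<exists>z. E y z \<and> z \<noteq> x"
  shows "\<exists>xs. is_cycle_list E xs"
proof -
  define path where "path ys \<longleftrightarrow> is_walk E ys \<and> distinct ys \<and> set ys \<subseteq> V \<and> 2 \<le> length ys"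
    for ys
  have "path [a, b]"
    using simple_graphD[OF G ab] ab by (auto simp: path_def is_walk_def less_Suc_eq)
  moreover have "length ys < card V + 1" if "path ys" for ys
  proof -
    have "length ys = card (set ys)" using that by (simp add: path_def distinct_card)
    also have "\<dots> \<le> card V"
      using that G by (intro card_mono) (auto simp: path_def simple_graph_def)
    finally show ?thesis by simp
  qed
  ultimately obtain ys where ys: "path ys" and longest: "\<And>zs. path zs \<Longrightarrow> length zs \<le> length ys"
    using ex_has_greatest_nat[of path "[a, b]" length "card V + 1"] by blast
  have walk: "\<And>i. Suc i < length ys \<Longrightarrow> E (ys ! i) (ys ! Suc i)"
    and dist: "distinct ys" and len: "2 \<le> length ys"
    using ys by (auto simp: path_def is_walk_def)
  obtain z where z: "E (ys ! 0) z" "z \<noteq> ys ! 1"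
    using extend simple_graphD(4)[OF G walk[of 0]] len by fastforce
  have "z \<in> set ys"
  proof (rule ccontr)
    assume "z \<notin> set ys"
    moreover have "E ((z # ys) ! i) ((z # ys) ! Suc i)" if "Suc i < length (z # ys)" for i
      using that walk simple_graphD(4)[OF G z(1)] by (cases i) auto
    ultimately have "path (z # ys)"
      using ys simple_graphD(2)[OF G z(1)] by (auto simp: path_def is_walk_def)
    with longest show False by fastforce
  qed
  then obtain j where j: "j < length ys" "ys ! j = z" by (auto simp: in_set_conv_nth)
  have "j \<noteq> 0" using j simple_graphD(3)[OF G z(1)] by metis
  moreover have "j \<noteq> 1" using j z(2) by auto
  moreover have "E (take (Suc j) ys ! i) (take (Suc j) ys ! (Suc i mod Suc j))" if "i < Suc j" for i
  proof (cases "i < j")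
    case True
    then show ?thesis using j walk[of i] by simp
  next
    case False
    with that have "i = j" by simp
    then show ?thesis using j simple_graphD(4)[OF G z(1)] by simp
  qed
  ultimately have "is_cycle_list E (take (Suc j) ys)"
    using j dist by (simp add: is_cycle_list_def)
  then show ?thesis by blast
qed

text \<open>Without cycles some vertex \<open>y\<close> has a single neighbour; removing it loses one vertex
  and one edge.\<close>

lemma card_edges_less_card_vertices_if_no_cycles:
  assumes "simple_graph V E" "V \<noteq> {}" "cycles E = {}"
  shows "card (edges V E) < card V"
  using assms
proof (induction "card V" arbitrary: V E rule: less_induct)
  case less
  have G: "simple_graph V E" and fin: "finite V" using less.prems(1) by (simp_all add: simple_graph_def)
  show ?case
  proof (cases "\<exists>a b. E a b")
    case False
    then have "edges V E = {}" by (auto simp: edges_def)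
    then show ?thesis using fin less.prems(2) by (simp add: card_gt_0_iff)
  next
    case True
    then obtain a b where ab: "E a b" by blast
    have "\<nexists>xs. is_cycle_list E xs" using less.prems(3) by (auto simp: cycles_def)
    then have "\<not> (\<forall>x y. E x y \<longrightarrow> (\<exists>z. E y z \<and> z \<noteq> x))"
      using cycle_if_every_edge_extends[OF G ab] by metis
    then obtain x y where xy: "E x y" and leaf: "\<And>z. E y z \<Longrightarrow> z = x" by blast
    define V' where "V' = V - {y}"
    define E' where "E' = (\<lambda>u v. E u v \<and> u \<noteq> y \<and> v \<noteq> y)"
    have G': "simple_graph V' E'"
      using G by (auto simp: simple_graph_def V'_def E'_def)
    have "V' \<noteq> {}" using simple_graphD[OF G xy] by (auto simp: V'_def)
    moreover have "cycles E' = {}"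
      using less.prems(3) unfolding cycles_def is_cycle_list_def E'_def by blast
    moreover have smaller: "card V' < card V"
      unfolding V'_def using fin simple_graphD(2)[OF G xy] by (rule card_Diff1_less)
    ultimately have IH: "card (edges V' E') < card V'"
      using less.hyps[OF _ G'] by blast
    have "edges V E \<subseteq> insert {x, y} (edges V' E')"
    proof
      fix e assume "e \<in> edges V E"
      then obtain u v where e: "e = {u, v}" "E u v" by (rule edges_memE[OF G])
      show "e \<in> insert {x, y} (edges V' E')"
      proof (cases "u = y \<or> v = y")
        case True
        then have "e = {x, y}"
          using e leaf[of v] leaf[of u] simple_graphD(4)[OF G e(2)] by (auto simp: insert_commute)
        then show ?thesis by simp
      next
        case False
        then have "E' u v" using e(2) by (simp add: E'_def)
        then show ?thesis using edges_memI[OF G'] e(1) by simp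
      qed
    qed
    then have "card (edges V E) \<le> card (insert {x, y} (edges V' E'))"
      using finite_edges[OF G'] by (intro card_mono) simp_all
    also have "\<dots> \<le> card (edges V' E') + 1"
      using finite_edges[OF G'] by (simp add: card_insert_if)
    finally show ?thesis using IH smaller by linarith
  qed
qed

lemma unicyclic_if_card_edges_eq_card_vertices:
  assumes G: "simple_graph V E" and conn: "connected_graph V E"
    and q: "card (edges V E) = card V"
  shows "unicyclic V E"
proof -
  have ne: "V \<noteq> {}" using conn by (simp add: connected_graph_def)
  then obtain a where a: "a \<in> V" by blast
  have reach: "\<forall>x\<in>V. E\<^sup>*\<^sup>* a x" using connected_graph_rtranclp[OF conn a] by blast
  have "cycles E \<noteq> {}" using card_edges_less_card_vertices_if_no_cycles[OF G ne] q by auto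
  then obtain C where C: "C \<in> cycles E" by blast
  have "C' = C" if "C' \<in> cycles E" for C'
    using card_vertices_less_card_edges_if_two_cycles[OF G a reach that C] q by fastforce
  with C conn show ?thesis unfolding unicyclic_def by blast
qed

lemma graph_alg_structure_if_incidence_inj:
  fixes V :: "'v set" and E :: "'v \<Rightarrow> 'v \<Rightarrow> bool"
  assumes G: "simple_graph V E" and conn: "connected_graph V E"
    and onto: "vecs (edges V E) \<subseteq> incidence V E ` (vecs V :: ('v \<Rightarrow> 'f::field) set)"
    and inj: "\<And>u :: 'v \<Rightarrow> 'f. u \<in> vecs V \<Longrightarrow> incidence V E u = 0 \<Longrightarrow> u = 0"
  shows "card (edges V E) = card V"
    and "nalg_iso (graph_alg V E :: ('v, 'v set, 'f) nalg) (On (card V))"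
    and "fdim (ann_graph TYPE('f) V E) = 0"
    and "unicyclic V E"
proof -
  let ?h = "incidence V E :: ('v \<Rightarrow> 'f) \<Rightarrow> 'v set \<Rightarrow> 'f"
  have fin: "finite V" "finite (edges V E)" using G finite_edges by (auto simp: simple_graph_def)
  have inj_on: "inj_on ?h (vecs V)"
    using inj fvp.linear_inj_on_iff_eq_0[OF flinear_incidence subspace_vecs] by blast
  have "card V \<le> card (edges V E)"
    by (rule card_le_card_if_flinear_inj[OF fin flinear_incidence _ inj_on])
      (auto intro: incidence_in_vecs)
  moreover have "card (edges V E) \<le> card V"
    by (rule card_le_card_if_flinear_onto[OF fin flinear_incidence onto])
  ultimately show q: "card (edges V E) = card V" by simp
  have "bij_betw ?h (vecs V) (vecs (edges V E))"
    using inj_on onto incidence_in_vecs by (auto simp: bij_betw_def)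
  then show "nalg_iso (graph_alg V E :: ('v, 'v set, 'f) nalg) (On (card V))"
    by (intro nalg_iso_On_if_nprod_factors[where h = ?h])
      (simp_all add: fin q flinear_incidence nprod_graph_alg[OF G])
  have "ann_graph TYPE('f) V E = {0}"
    using inj fv.subspace_0[OF subspace_vecs]
    by (auto simp: ann_graph_eq_kernel[OF G] fvp.linear_0[OF flinear_incidence])
  then show "fdim (ann_graph TYPE('f) V E) = 0" by (simp add: fdim_zero)
  show "unicyclic V E" by (rule unicyclic_if_card_edges_eq_card_vertices[OF G conn q])
qed

lemma graph_alg_structure_if_incidence_kernel_nonzero:
  fixes V :: "'v set" and E :: "'v \<Rightarrow> 'v \<Rightarrow> bool"
  assumes char: "(2::'f::field) \<noteq> 0" and G: "simple_graph V E" and conn: "connected_graph V E"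
    and onto: "vecs (edges V E) \<subseteq> incidence V E ` (vecs V :: ('v \<Rightarrow> 'f) set)"
    and odd: "\<And>xs. is_cycle_list E xs \<Longrightarrow> odd (length xs)"
    and k: "k \<in> vecs V" "incidence V E k = 0" "k \<noteq> (0 :: 'v \<Rightarrow> 'f)"
  shows "card (edges V E) = card V - 1"
    and "nalg_iso (graph_alg V E :: ('v, 'v set, 'f) nalg) (nalg_sum F0 (On (card V - 1)))"
    and "fdim (ann_graph TYPE('f) V E) = 1"
    and "is_tree V E"
proof -
  let ?h = "incidence V E :: ('v \<Rightarrow> 'f) \<Rightarrow> 'v set \<Rightarrow> 'f"
  have fin: "finite V" "finite (edges V E)" using G finite_edges by (auto simp: simple_graph_def)
  obtain a where a: "a \<in> V" using conn by (auto simp: connected_graph_def)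
  have reach: "\<forall>x\<in>V. E\<^sup>*\<^sup>* a x" using connected_graph_rtranclp[OF conn a] by blast
  note ker = incidence_kernel_eq_0_if_vanishes[OF G reach]
  have "card (edges V E) < card V"
    by (rule card_less_card_if_flinear_onto_kernel[where f = ?h, OF fin flinear_incidence onto k(1,3,2)])
  moreover have "card V \<le> card (edges V E) + 1"
    by (rule card_vertices_le_Suc_card_edges[OF G a reach])
  ultimately show q: "card (edges V E) = card V - 1" by linarith
  have "k a \<noteq> 0" using ker k by blast
  define k1 where "k1 = fscale (1 / k a) k"
  have "k1 \<in> vecs V" unfolding k1_def by (rule fv.subspace_scale[OF subspace_vecs k(1)])
  moreover have "?h k1 = 0"
    unfolding k1_def fvp.linear_scale[OF flinear_incidence] k(2) by (simp add: zero_fun_def)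
  moreover have "k1 a = 1" using \<open>k a \<noteq> 0\<close> by (simp add: k1_def)
  ultimately have k1: "k1 \<in> vecs V" "?h k1 = 0" "k1 a = 1" by blast+
  show "nalg_iso (graph_alg V E :: ('v, 'v set, 'f) nalg) (nalg_sum F0 (On (card V - 1)))"
    using incidence_in_vecs ker
    by (intro nalg_iso_F0_On_if_nprod_factors[where h = ?h and k = k1 and a = a])
      (auto simp: fin q k1 onto flinear_incidence nprod_graph_alg[OF G])
  have "ann_graph TYPE('f) V E = range (\<lambda>c. fscale c k1)"
    unfolding ann_graph_eq_kernel[OF G] by (rule incidence_kernel_eq_line[OF G reach k1])
  moreover have "k1 \<noteq> 0" using k1(3) by auto
  ultimately show "fdim (ann_graph TYPE('f) V E) = 1" by (simp add: fdim_line)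
  have "cycles E = {}"
  proof (rule ccontr)
    assume "cycles E \<noteq> {}"
    then obtain xs where "is_cycle_list E xs" by (auto simp: cycles_def)
    then have "k = 0" using incidence_kernel_trivial_if_odd_cycle[OF char G conn _ odd k(1,2)] by blast
    with k(3) show False ..
  qed
  with conn show "is_tree V E" by (simp add: is_tree_def)
qed

theorem theorem6p3:
  fixes V :: "'v set" and E :: "'v \<Rightarrow> 'v \<Rightarrow> bool"
  assumes char: "(2::'f::field) \<noteq> 0"
    and G: "simple_graph V E"
    and conn: "connected_graph V E"
    and esq: "edge_square TYPE('f) V E"
  defines "p \<equiv> card V" and "q \<equiv> card (edges V E)"
  shows "(q = p - 1 \<or> q = p)
    \<and> (q = p - 1 \<longrightarrow>
          nalg_iso (graph_alg V E :: ('v, 'v set, 'f) nalg) (nalg_sum (F0 :: (unit, nat, 'f) nalg) (On (p - 1)))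
          \<and> fdim (ann_graph TYPE('f) V E) = 1
          \<and> is_tree V E)
    \<and> (q = p \<longrightarrow>
          nalg_iso (graph_alg V E :: ('v, 'v set, 'f) nalg) (On p :: (nat, nat, 'f) nalg)
          \<and> fdim (ann_graph TYPE('f) V E) = 0
          \<and> unicyclic V E \<and> (\<forall>C \<in> cycles E. odd (card C)))"
proof -
  have onto: "vecs (edges V E) \<subseteq> incidence V E ` (vecs V :: ('v \<Rightarrow> 'f) set)"
    by (rule incidence_onto_if_edge_square[OF G esq])
  have odd: "\<And>xs. is_cycle_list E xs \<Longrightarrow> odd (length xs)"
    by (rule odd_cycle_if_edge_square[OF G esq])
  then have odd_cycles: "\<forall>C \<in> cycles E. odd (card C)"
    by (auto simp: cycles_def card_cycle_edges)
  have "p \<noteq> 0" using G conn unfolding p_def by (simp add: simple_graph_def connected_graph_def)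
  show ?thesis
  proof (cases "\<exists>k \<in> vecs V. incidence V E k = 0 \<and> k \<noteq> (0 :: 'v \<Rightarrow> 'f)")
    case True
    then obtain k :: "'v \<Rightarrow> 'f" where "k \<in> vecs V" "incidence V E k = 0" "k \<noteq> 0" by blast
    from graph_alg_structure_if_incidence_kernel_nonzero[OF char G conn onto odd this] \<open>p \<noteq> 0\<close>
    show ?thesis unfolding p_def q_def by auto
  next
    case False
    then have "\<And>u :: 'v \<Rightarrow> 'f. u \<in> vecs V \<Longrightarrow> incidence V E u = 0 \<Longrightarrow> u = 0" by blast
    from graph_alg_structure_if_incidence_inj[OF G conn onto this] odd_cycles \<open>p \<noteq> 0\<close>
    show ?thesis unfolding p_def q_def by auto
  qed
qed

end
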